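(* There is an absolute constant $c>0$ such that the following holds. Let $\mathsf{M}\ge 1$, $\mathsf{N}\ge 2$ and $\mathsf{T}$ be positive integers with $\mathsf{M}\mathsf{T}\ge \mathsf{N}-1$, and consider the online matrix completion model in which the noise variables are i.i.d. $\mathcal{N}(0,1)$ (so $\sigma^2=1$). Then for every online algorithm there exists a reward matrix $\mathbf{P}\in\mathbb{R}^{\mathsf{M}\times\mathsf{N}}$ of rank at most $1$ with $0\le \mathbf{P}_{ij}\le 1$ for all $(i,j)\in[\mathsf{M}]\times[\mathsf{N}]$ such that the algorithm's regret satisfies $\mathsf{Reg}(\mathsf{T})\ge c\sqrt{\mathsf{N}\mathsf{T}/\mathsf{M}}$.
   Context: Online matrix completion model: there are $\mathsf{M}$ users, $\mathsf{N}$ items and $\mathsf{T}$ rounds, and an unknown reward matrix $\mathbf{P}\in\mathbb{R}^{\mathsf{M}\times\mathsf{N}}$. In each round $t\in[\mathsf{T}]$ an online algorithm selects, for every user $u\in[\mathsf{M}]$, an item $\rho_u(t)\in[\mathsf{N}]$ (possibly at random, and depending only on rewards observed in earlier rounds), and observes $\mathbf{R}^{(t)}_{u\rho_u(t)}=\mathbf{P}_{u\rho_u(t)}+\mathbf{E}^{(t)}_{u\rho_u(t)}$, where the noise variables $\mathbf{E}^{(t)}_{u\rho_u(t)}$, $u\in[\mathsf{M}],t\in[\mathsf{T}]$, are independent, zero-mean and sub-Gaussian with variance proxy $\sigma^2$, i.e. $\mathbb{E}[\exp(s\mathbf{E})]\le\exp(\sigma^2 s^2/2)$ for all $s\in\mathbb{R}$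 (fresh noise at each recommendation, even if an item is recommended repeatedly). Let $\mu^\star_u=\max_{j\in[\mathsf{N}]}\mathbf{P}_{uj}$. The regret is $\mathsf{Reg}(\mathsf{T})=\frac{\mathsf{T}}{\mathsf{M}}\sum_{u\in[\mathsf{M}]}\mu^\star_u-\mathbb{E}\big[\sum_{t\in[\mathsf{T}]}\frac{1}{\mathsf{M}}\sum_{u\in[\mathsf{M}]}\mathbf{R}^{(t)}_{u\rho_u(t)}\big]$, the expectation being over the noise and the algorithm's randomness. *)

theory Defs
  imports "HOL-Probability.Probability" "Jordan_Normal_Form.DL_Rank"
begin

(* Indices: users u < M, items j < N, rounds t < T (0-based).
   Reward matrix P :: nat => nat => real, only entries u<M, j<N matter.

   Noise: one fresh N(0,1) variable Z(t,u) per recommendation (round t, user u);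
   each user receives exactly one recommendation per round, so this is exactly
   the "fresh noise at each recommendation" model. *)

definition noise_space :: "nat \<Rightarrow> nat \<Rightarrow> (nat \<times> nat \<Rightarrow> real) measure" where
  "noise_space T M = PiM ({..<T} \<times> {..<M}) (\<lambda>_. std_normal_distribution)"

(* Online algorithm: alg t r Y u = item recommended to user u in round t, given the
   internal random seed r (drawn from an arbitrary probability distribution S on the
   reals) and the matrix Y of rewards observed in earlier rounds (Y s u for s < t).
   Earlier recommendations are deterministic functions of r and earlier observations,
   so they need not be passed separately. *)

type_synonym algorithm = "nat \<Rightarrow> real \<Rightarrow> (nat \<Rightarrow> nat \<Rightarrow> real) \<Rightarrow> nat \<Rightarrow> nat"

definition obs_space :: "(nat \<Rightarrow> nat \<Rightarrow> real) measure" where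
  "obs_space = PiM UNIV (\<lambda>_. PiM UNIV (\<lambda>_. borel))"

definition online_algorithm :: "nat \<Rightarrow> nat \<Rightarrow> algorithm \<Rightarrow> bool" where
  "online_algorithm M N alg \<longleftrightarrow>
     (\<forall>t r Y u. u < M \<longrightarrow> alg t r Y u < N) \<and>
     (\<forall>t u. (\<lambda>(r, Y). alg t r Y u) \<in> measurable (borel \<Otimes>\<^sub>M obs_space) (count_space UNIV))"

(* observations of rounds < t (zero for rounds >= t and users >= M) *)
fun obs :: "algorithm \<Rightarrow> (nat \<Rightarrow> nat \<Rightarrow> real) \<Rightarrow> nat \<Rightarrow> real \<Rightarrow> (nat \<times> nat \<Rightarrow> real)
              \<Rightarrow> nat \<Rightarrow> (nat \<Rightarrow> nat \<Rightarrow> real)" where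
  "obs alg P M r Z 0 = (\<lambda>_ _. 0)"
| "obs alg P M r Z (Suc t) = (obs alg P M r Z t)(t := (\<lambda>u. if u < M
        then P u (alg t r (obs alg P M r Z t) u) + Z (t, u) else 0))"

definition rec_item :: "algorithm \<Rightarrow> (nat \<Rightarrow> nat \<Rightarrow> real) \<Rightarrow> nat \<Rightarrow> real \<Rightarrow> (nat \<times> nat \<Rightarrow> real)
              \<Rightarrow> nat \<Rightarrow> nat \<Rightarrow> nat" where
  "rec_item alg P M r Z t u = alg t r (obs alg P M r Z t) u"

definition regret :: "algorithm \<Rightarrow> real measure \<Rightarrow> (nat \<Rightarrow> nat \<Rightarrow> real) \<Rightarrow> nat \<Rightarrow> nat \<Rightarrow> nat \<Rightarrow> real" where
  "regret alg S P M N T =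
     real T / real M * (\<Sum>u<M. Max (P u ` {..<N}))
     - (\<integral>\<omega>. (case \<omega> of (r, Z) \<Rightarrow>
          (\<Sum>t<T. (1 / real M) * (\<Sum>u<M. P u (rec_item alg P M r Z t u) + Z (t, u))))
        \<partial>(S \<Otimes>\<^sub>M noise_space T M))"

definition to_mat :: "nat \<Rightarrow> nat \<Rightarrow> (nat \<Rightarrow> nat \<Rightarrow> real) \<Rightarrow> real mat" where
  "to_mat M N P = mat M N (\<lambda>(i, j). P i j)"

end

theory Submission imports Defs begin

text \<open>Compare the flat instance, in which every reward is \<open>1/2\<close>, with the rank-one instance in which
  item \<open>j\<close> is raised by \<open>\<Delta>\<close>. On the flat instance some item \<open>j\<close> is recommended at most \<open>TM/N\<close> times
  in expectation. Running the algorithm on the bumped instance with noise \<open>Z\<close> yields the same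
  observations as running it on the flat instance with \<open>Z\<close> shifted by \<open>\<Delta>\<close> in exactly those slots in
  which \<open>j\<close> is recommended; as a shifted Gaussian has density \<open>exp (\<Delta> x - \<Delta>\<^sup>2/2)\<close>, the expected
  number of recommendations of \<open>j\<close> on the bumped instance is \<open>E [n L]\<close> on the flat instance, where \<open>n\<close>
  counts the recommendations of \<open>j\<close> and \<open>L\<close> is the likelihood ratio. Since \<open>E L = 1\<close> and
  \<open>E ln L = - \<Delta>\<^sup>2/2 E n\<close> (the noise of a slot is independent of the recommendation made in it), an
  elementary Hellinger-type inequality bounds \<open>E [n (L - 1)]\<close>. For \<open>\<Delta> = \<surd>(N/(16TM))\<close> item \<open>j\<close> is
  still recommended at most \<open>11TM/16\<close> times on the bumped instance, so the regret there is at least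
  \<open>5/16 T \<Delta> \<ge> \<surd>(NT/M)/16\<close>.\<close>

section \<open>Elementary inequalities\<close>

lemma exists_le_average:
  fixes f :: "'a \<Rightarrow> 'b::linordered_field"
  assumes "finite A" "A \<noteq> {}"
  shows "\<exists>j\<in>A. f j \<le> sum f A / of_nat (card A)"
proof (rule ccontr)
  assume "\<not> ?thesis"
  then have "(\<Sum>j\<in>A. sum f A / of_nat (card A)) < sum f A"
    using assms by (intro sum_strict_mono) auto
  then show False
    using assms by simp
qed

text \<open>A Hellinger-type estimate: with \<open>s = \<surd>L\<close>, \<open>\<bar>L - 1\<bar> = \<bar>s - 1\<bar> (s + 1)\<close> is split by AM-GM, and
  \<open>(s - 1)\<^sup>2 \<le> L - 1 - ln L\<close> because \<open>ln L = 2 ln s \<le> 2 (s - 1)\<close>.\<close>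

lemma abs_diff_one_le_divergence:
  fixes L \<epsilon> :: real
  assumes "0 < L" "0 < \<epsilon>"
  shows "\<bar>L - 1\<bar> \<le> (L - 1 - ln L) / (2 * \<epsilon>) + \<epsilon> * (L + 1)"
proof -
  define s where "s = sqrt L"
  have "0 < s" and L_eq: "L = s\<^sup>2"
    using assms by (auto simp: s_def)
  have "L - 1 = (s - 1) * (s + 1)"
    by (simp add: L_eq power2_eq_square algebra_simps)
  then have "\<bar>L - 1\<bar> = \<bar>s - 1\<bar> * (s + 1)"
    using \<open>0 < s\<close> by (simp add: abs_mult)
  also have "\<dots> \<le> (s - 1)\<^sup>2 / (2 * \<epsilon>) + \<epsilon> * (s + 1)\<^sup>2 / 2"
  proof -
    have "0 \<le> (\<bar>s - 1\<bar> - \<epsilon> * (s + 1))\<^sup>2"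
      by simp
    then have "2 * \<epsilon> * (\<bar>s - 1\<bar> * (s + 1)) \<le> (s - 1)\<^sup>2 + \<epsilon>\<^sup>2 * (s + 1)\<^sup>2"
      by (simp add: power2_eq_square algebra_simps)
    then show ?thesis
      using assms(2) by (simp add: field_simps power2_eq_square)
  qed
  also have "(s - 1)\<^sup>2 \<le> L - 1 - ln L"
  proof -
    have "ln L = 2 * ln s"
      using \<open>0 < s\<close> by (simp add: L_eq ln_realpow)
    moreover have "ln s \<le> s - 1"
      using \<open>0 < s\<close> by (rule ln_le_minus_one)
    ultimately show ?thesis
      by (simp add: L_eq power2_eq_square algebra_simps)
  qed
  also have "(s + 1)\<^sup>2 \<le> 2 * (L + 1)"
    using zero_le_power2[of "s - 1"] by (simp add: L_eq power2_eq_square algebra_simps)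
  finally have "\<bar>L - 1\<bar> \<le> (L - 1 - ln L) / (2 * \<epsilon>) + \<epsilon> * (2 * (L + 1)) / 2"
    using assms(2) by (simp add: divide_right_mono mult_left_mono)
  moreover have "\<epsilon> * (2 * (L + 1)) / 2 = \<epsilon> * (L + 1)"
    by simp
  ultimately show ?thesis
    by linarith
qed

lemma mult_diff_one_le:
  fixes a K L :: real
  assumes "0 \<le> a" "a \<le> K"
  shows "a * (L - 1) \<le> K / 2 * (\<bar>L - 1\<bar> + (L - 1))"
proof (cases "L \<ge> 1")
  case True
  then have "a * (L - 1) \<le> K * (L - 1)"
    using assms by (intro mult_right_mono) auto
  then show ?thesis using True by (simp add: algebra_simps)
next
  case False
  then show ?thesis using assms by (simp add: mult_nonneg_nonpos)
qed

section \<open>Measure-theoretic tools\<close>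

lemma nn_integral_finite_partition:
  assumes "finite S" and h: "\<And>x. x \<in> space M \<Longrightarrow> h x \<in> S"
    and [measurable]: "\<And>p. p \<in> S \<Longrightarrow> {x \<in> space M. h x = p} \<in> sets M"
      "\<And>p. p \<in> S \<Longrightarrow> F p \<in> borel_measurable M"
  shows "(\<integral>\<^sup>+ x. F (h x) x \<partial>M) = (\<Sum>p\<in>S. \<integral>\<^sup>+ x. F p x * indicator {x \<in> space M. h x = p} x \<partial>M)"
proof -
  have "(\<integral>\<^sup>+ x. F (h x) x \<partial>M) = (\<integral>\<^sup>+ x. (\<Sum>p\<in>S. F p x * indicator {x \<in> space M. h x = p} x) \<partial>M)"
    using h \<open>finite S\<close> by (intro nn_integral_cong) (simp add: indicator_def if_distrib sum.If_cases)
  also have "\<dots> = (\<Sum>p\<in>S. \<integral>\<^sup>+ x. F p x * indicator {x \<in> space M. h x = p} x \<partial>M)"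
    by (rule nn_integral_sum) simp
  finally show ?thesis .
qed

lemma distr_pair_snd:
  assumes "prob_space S" "sigma_finite_measure N"
  shows "distr (S \<Otimes>\<^sub>M N) N snd = N"
proof (rule measure_eqI)
  fix A assume "A \<in> sets (distr (S \<Otimes>\<^sub>M N) N snd)"
  then have A: "A \<in> sets N" by simp
  have "snd -` A \<inter> space (S \<Otimes>\<^sub>M N) = space S \<times> A"
    using sets.sets_into_space[OF A] by (auto simp: space_pair_measure)
  then show "emeasure (distr (S \<Otimes>\<^sub>M N) N snd) A = emeasure N A"
    using A assms by (simp add: emeasure_distr sigma_finite_measure.emeasure_pair_measure_Times
        prob_space.emeasure_space_1)
qed simp

lemma distr_PiM_componentwise:
  fixes f :: "'i \<Rightarrow> 'a \<Rightarrow> 'a" and g :: "'i \<Rightarrow> 'a \<Rightarrow> ennreal"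
  assumes fin: "finite I" and M: "prob_space M"
    and [measurable]: "\<And>i. i \<in> I \<Longrightarrow> f i \<in> M \<rightarrow>\<^sub>M M" "\<And>i. i \<in> I \<Longrightarrow> g i \<in> borel_measurable M"
    and image_density: "\<And>i A. i \<in> I \<Longrightarrow> A \<in> sets M \<Longrightarrow>
       emeasure M (f i -` A \<inter> space M) = (\<integral>\<^sup>+ x. g i x * indicator A x \<partial>M)"
  shows "distr (PiM I (\<lambda>_. M)) (PiM I (\<lambda>_. M)) (\<lambda>x. \<lambda>i\<in>I. f i (x i)) =
         density (PiM I (\<lambda>_. M)) (\<lambda>x. \<Prod>i\<in>I. g i (x i))"
    (is "distr ?P ?P ?f = density ?P ?g")
proof -
  interpret product_prob_space "\<lambda>_. M" I
    by (intro product_prob_spaceI) (rule M)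
  have f_meas: "?f \<in> ?P \<rightarrow>\<^sub>M ?P"
    by measurable
  have g_meas: "?g \<in> borel_measurable ?P"
    by measurable
  show ?thesis
  proof (rule measure_eqI_PiM_finite[where A="\<lambda>_. space ?P"])
    show "range (\<lambda>_::nat. space ?P) \<subseteq> prod_algebra I (\<lambda>_. M)"
      using space_in_prod_algebra[of I "\<lambda>_. M"] by (auto simp: space_PiM)
    show "emeasure (distr ?P ?P ?f) (space ?P) \<noteq> \<infinity>"
      by (simp add: emeasure_distr f_meas)
  next
    fix A assume A[measurable]: "\<And>i. i \<in> I \<Longrightarrow> A i \<in> sets M"
    have "?f -` Pi\<^sub>E I A \<inter> space ?P = Pi\<^sub>E I (\<lambda>i. f i -` A i \<inter> space M)"
      by (auto simp: space_PiM PiE_def Pi_def extensional_def)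
    then have "emeasure (distr ?P ?P ?f) (Pi\<^sub>E I A) = (\<Prod>i\<in>I. emeasure M (f i -` A i \<inter> space M))"
      using f_meas fin by (simp add: emeasure_distr sets_PiM_I_finite emeasure_PiM)
    also have "\<dots> = (\<Prod>i\<in>I. (\<integral>\<^sup>+ x. g i x * indicator (A i) x \<partial>M))"
      by (intro prod.cong refl image_density A)
    also have "\<dots> = (\<integral>\<^sup>+ x. (\<Prod>i\<in>I. g i (x i) * indicator (A i) (x i)) \<partial>?P)"
      by (subst product_nn_integral_prod) (auto simp: fin)
    also have "\<dots> = (\<integral>\<^sup>+ x. ?g x * indicator (Pi\<^sub>E I A) x \<partial>?P)"
      by (intro nn_integral_cong)
         (auto simp: space_PiM prod.distrib indicator_def PiE_def Pi_def prod_zero_iff fin)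
    also have "\<dots> = emeasure (density ?P ?g) (Pi\<^sub>E I A)"
      using g_meas by (subst emeasure_density) (auto intro!: sets_PiM_I_finite fin)
    finally show "emeasure (distr ?P ?P ?f) (Pi\<^sub>E I A) = emeasure (density ?P ?g) (Pi\<^sub>E I A)" .
  qed (auto simp: fin)
qed

lemma prob_space_std_normal_distribution: "prob_space std_normal_distribution"
  using real_dist_normal_dist real_distribution.axioms(1) by blast

lemma emeasure_std_normal_shift:
  assumes [measurable]: "A \<in> sets borel"
  shows "emeasure std_normal_distribution {x. x + d \<in> A} =
    (\<integral>\<^sup>+ x. ennreal (exp (d * x - d\<^sup>2 / 2)) * indicator A x \<partial>std_normal_distribution)"
proof -
  have density_shift: "std_normal_density (x - d) = std_normal_density x * exp (d * x - d\<^sup>2 / 2)" for x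
    by (simp add: std_normal_density_def mult_exp_exp power2_eq_square algebra_simps
        add_divide_distrib diff_divide_distrib)
  have "emeasure std_normal_distribution {x. x + d \<in> A} =
      (\<integral>\<^sup>+ x. ennreal (std_normal_density (d + 1 * x - d)) * indicator A (d + 1 * x) \<partial>lborel)"
    by (subst emeasure_density) (auto intro!: nn_integral_cong split: split_indicator simp: add.commute)
  also have "\<dots> = (\<integral>\<^sup>+ x. ennreal (std_normal_density (x - d)) * indicator A x \<partial>lborel)"
    by (subst nn_integral_real_affine[where c=1 and t=d]) auto
  also have "\<dots> = (\<integral>\<^sup>+ x. ennreal (std_normal_density x) *
      (ennreal (exp (d * x - d\<^sup>2 / 2)) * indicator A x) \<partial>lborel)"
    by (intro nn_integral_cong) (simp add: density_shift ennreal_mult' mult.assoc)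
  also have "\<dots> = (\<integral>\<^sup>+ x. ennreal (exp (d * x - d\<^sup>2 / 2)) * indicator A x \<partial>std_normal_distribution)"
    by (subst nn_integral_density) auto
  finally show ?thesis .
qed

lemma emeasure_std_normal_uminus:
  assumes [measurable]: "A \<in> sets borel"
  shows "emeasure std_normal_distribution {x. - x \<in> A} = emeasure std_normal_distribution A"
proof -
  have "emeasure std_normal_distribution {x. - x \<in> A} =
      (\<integral>\<^sup>+ x. ennreal (std_normal_density (0 + (-1) * x)) * indicator A (0 + (-1) * x) \<partial>lborel)"
    by (subst emeasure_density) (auto intro!: nn_integral_cong split: split_indicator simp: std_normal_density_def)
  also have "\<dots> = (\<integral>\<^sup>+ x. ennreal (std_normal_density x) * indicator A x \<partial>lborel)"
    by (subst nn_integral_real_affine[where c="-1" and t=0]) auto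
  also have "\<dots> = emeasure std_normal_distribution A"
    by (subst emeasure_density) auto
  finally show ?thesis .
qed

section \<open>Noise and observations\<close>

lemma prob_space_noise_space: "prob_space (noise_space T M)"
proof -
  interpret product_prob_space "\<lambda>_. std_normal_distribution" "{..<T} \<times> {..<M}"
    by (intro product_prob_spaceI) (rule prob_space_std_normal_distribution)
  show ?thesis unfolding noise_space_def by (rule P.prob_space_axioms)
qed

lemma
  assumes "t < T" "u < M"
  shows measurable_noise_component: "(\<lambda>Z. Z (t, u)) \<in> borel_measurable (noise_space T M)"
    and integrable_noise_component: "integrable (noise_space T M) (\<lambda>Z. Z (t, u))"
    and integral_noise_component: "(\<integral>Z. Z (t, u) \<partial>noise_space T M) = 0"
proof -
  have tu: "(t, u) \<in> {..<T} \<times> {..<M}" using assms by auto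
  have component: "(\<lambda>Z. Z (t, u)) \<in> noise_space T M \<rightarrow>\<^sub>M std_normal_distribution"
    unfolding noise_space_def using tu by (rule measurable_component_singleton)
  then show "(\<lambda>Z. Z (t, u)) \<in> borel_measurable (noise_space T M)"
    by (simp cong: measurable_cong_sets)
  have law: "distr (noise_space T M) std_normal_distribution (\<lambda>Z. Z (t, u)) = std_normal_distribution"
    unfolding noise_space_def using tu
    by (intro distr_PiM_component) (auto intro: prob_space_std_normal_distribution)
  have "integrable std_normal_distribution (\<lambda>x::real. x)"
    using integrable_std_normal_distribution_moment[of 1] by simp
  then show "integrable (noise_space T M) (\<lambda>Z. Z (t, u))"
    by (subst (asm) law[symmetric]) (simp add: integrable_distr_eq[OF component])
  have "(\<integral>Z. Z (t, u) \<partial>noise_space T M) = (\<integral>x. x ^ 1 \<partial>std_normal_distribution)"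
    by (subst law[symmetric]) (simp add: integral_distr[OF component])
  also have "\<dots> = 0"
    by (rule integral_std_normal_distribution_moment_odd) simp
  finally show "(\<integral>Z. Z (t, u) \<partial>noise_space T M) = 0" .
qed

lemma obs_cong_noise:
  assumes "\<And>s u. s < t \<Longrightarrow> u < M \<Longrightarrow> Z (s, u) = Z' (s, u)"
  shows "obs alg P M r Z t = obs alg P M r Z' t"
  using assms
proof (induction t)
  case (Suc t)
  then have IH: "obs alg P M r Z t = obs alg P M r Z' t" by auto
  show ?case unfolding obs.simps IH using Suc.prems[of t] by (auto simp: fun_eq_iff)
qed simp

lemma measurable_obs_spaceI:
  assumes "\<And>s u. (\<lambda>x. Y x s u) \<in> borel_measurable X"
  shows "Y \<in> X \<rightarrow>\<^sub>M obs_space"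
  unfolding obs_space_def
  by (intro measurable_PiM_single') (auto simp: space_PiM assms)

lemma measurable_obs_space_component: "(\<lambda>Y. Y s u) \<in> obs_space \<rightarrow>\<^sub>M borel"
proof -
  have "(\<lambda>Y. Y s) \<in> obs_space \<rightarrow>\<^sub>M PiM UNIV (\<lambda>_. borel)"
    unfolding obs_space_def by (rule measurable_component_singleton) simp
  then show ?thesis by (rule measurable_compose) (rule measurable_component_singleton, simp)
qed

lemma measurable_obs:
  assumes alg: "online_algorithm M N alg" and "t \<le> T"
  shows "(\<lambda>x. obs alg P M (fst x) (snd x) t) \<in> borel \<Otimes>\<^sub>M noise_space T M \<rightarrow>\<^sub>M obs_space"
  using \<open>t \<le> T\<close>
proof (induction t)
  case 0
  show ?case by (rule measurable_obs_spaceI) simp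
next
  case (Suc t)
  then have obs_t: "(\<lambda>x. obs alg P M (fst x) (snd x) t) \<in> borel \<Otimes>\<^sub>M noise_space T M \<rightarrow>\<^sub>M obs_space"
    by simp
  have "(\<lambda>(r, Y). alg t r Y u) \<in> borel \<Otimes>\<^sub>M obs_space \<rightarrow>\<^sub>M count_space UNIV" for u
    using alg by (simp add: online_algorithm_def)
  from measurable_compose[OF measurable_Pair[OF measurable_fst obs_t] this]
  have "(\<lambda>x. alg t (fst x) (obs alg P M (fst x) (snd x) t) u)
      \<in> borel \<Otimes>\<^sub>M noise_space T M \<rightarrow>\<^sub>M count_space UNIV" for u
    by simp
  then have reward: "(\<lambda>x. P u (alg t (fst x) (obs alg P M (fst x) (snd x) t) u))
      \<in> borel_measurable (borel \<Otimes>\<^sub>M noise_space T M)" for u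
    by (rule measurable_compose) simp
  have noise: "(\<lambda>x. snd x (t, u)) \<in> borel_measurable (borel \<Otimes>\<^sub>M noise_space T M)" if "u < M" for u
    using measurable_noise_component[of t T u M] Suc.prems that by simp
  have old: "(\<lambda>x. obs alg P M (fst x) (snd x) t s u) \<in> borel_measurable (borel \<Otimes>\<^sub>M noise_space T M)" for s u
    by (rule measurable_compose[OF obs_t measurable_obs_space_component])
  show ?case
  proof (rule measurable_obs_spaceI)
    fix s u
    show "(\<lambda>x. obs alg P M (fst x) (snd x) (Suc t) s u) \<in> borel_measurable (borel \<Otimes>\<^sub>M noise_space T M)"
      using old[of s u] borel_measurable_add[OF reward[of u] noise[of u]] by (cases "s = t"; cases "u < M") auto
  qed
qed

lemma measurable_rec_item:
  assumes alg: "online_algorithm M N alg" and "t \<le> T"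
  shows "(\<lambda>x. rec_item alg P M (fst x) (snd x) t u) \<in> borel \<Otimes>\<^sub>M noise_space T M \<rightarrow>\<^sub>M count_space UNIV"
proof -
  have "(\<lambda>(r, Y). alg t r Y u) \<in> borel \<Otimes>\<^sub>M obs_space \<rightarrow>\<^sub>M count_space UNIV"
    using alg by (simp add: online_algorithm_def)
  from measurable_compose[OF measurable_Pair[OF measurable_fst measurable_obs[OF assms]] this]
  show ?thesis by (simp add: rec_item_def)
qed

lemma measurable_rec_item_noise:
  assumes "online_algorithm M N alg" and "t \<le> T"
  shows "(\<lambda>Z. rec_item alg P M r Z t u) \<in> noise_space T M \<rightarrow>\<^sub>M count_space UNIV"
  using measurable_compose[OF measurable_Pair1' measurable_rec_item[OF assms], of r] by simp

section \<open>Change of measure for a bumped item\<close>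

definition flat_rewards :: "nat \<Rightarrow> nat \<Rightarrow> real" where
  "flat_rewards = (\<lambda>u k. 1 / 2)"

definition bumped_rewards :: "real \<Rightarrow> nat \<Rightarrow> nat \<Rightarrow> nat \<Rightarrow> real" where
  "bumped_rewards \<Delta> j = (\<lambda>u k. 1 / 2 + (if k = j then \<Delta> else 0))"

definition item_count :: "algorithm \<Rightarrow> (nat \<Rightarrow> nat \<Rightarrow> real) \<Rightarrow> nat \<Rightarrow> nat \<Rightarrow> real
    \<Rightarrow> (nat \<times> nat \<Rightarrow> real) \<Rightarrow> nat \<Rightarrow> real" where
  "item_count alg P M T r Z j = (\<Sum>t<T. \<Sum>u<M. if rec_item alg P M r Z t u = j then 1 else 0)"

lemma obs_bumped_eq_obs_flat:
  assumes "\<And>s u. s < t \<Longrightarrow> u < M \<Longrightarrow>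
      obs alg (bumped_rewards \<Delta> j) M r Z s = obs alg flat_rewards M r W s \<Longrightarrow>
      W (s, u) = Z (s, u) + (if rec_item alg flat_rewards M r W s u = j then \<Delta> else 0)"
  shows "obs alg (bumped_rewards \<Delta> j) M r Z t = obs alg flat_rewards M r W t"
  using assms
proof (induction t)
  case (Suc t)
  then have IH: "obs alg (bumped_rewards \<Delta> j) M r Z t = obs alg flat_rewards M r W t"
    by simp
  have "bumped_rewards \<Delta> j u (alg t r (obs alg flat_rewards M r W t) u) + Z (t, u) =
      flat_rewards u (alg t r (obs alg flat_rewards M r W t) u) + W (t, u)" if "u < M" for u
    using Suc.prems[OF _ that IH] by (simp add: rec_item_def flat_rewards_def bumped_rewards_def)
  then show ?case
    unfolding obs.simps IH by (auto simp: fun_eq_iff)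
qed simp

locale bump_experiment =
  fixes M N T :: nat and alg :: algorithm and r :: real and \<Delta> :: real and j :: nat
  assumes alg: "online_algorithm M N alg"
begin

abbreviation "\<nu> \<equiv> noise_space T M"

definition slots :: "(nat \<times> nat) set" where
  "slots = {..<T} \<times> {..<M}"

definition hits :: "(nat \<Rightarrow> nat \<Rightarrow> real) \<Rightarrow> (nat \<times> nat \<Rightarrow> real) \<Rightarrow> (nat \<times> nat) set" where
  "hits P Z = {i \<in> slots. rec_item alg P M r Z (fst i) (snd i) = j}"

definition shift :: "(nat \<times> nat) set \<Rightarrow> (nat \<times> nat \<Rightarrow> real) \<Rightarrow> nat \<times> nat \<Rightarrow> real" where
  "shift p Z = (\<lambda>i\<in>slots. Z i + (if i \<in> p then \<Delta> else 0))"

definition likelihood :: "(nat \<times> nat) set \<Rightarrow> (nat \<times> nat \<Rightarrow> real) \<Rightarrow> real" where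
  "likelihood p W = exp (\<Sum>i\<in>p. \<Delta> * W i - \<Delta>\<^sup>2 / 2)"

lemma finite_slots [simp]: "finite slots"
  by (simp add: slots_def)

lemma hits_subset_slots: "hits P Z \<subseteq> slots"
  by (auto simp: hits_def)

lemma item_count_eq_card_hits: "item_count alg P M T r Z j = real (card (hits P Z))"
proof -
  have "item_count alg P M T r Z j = (\<Sum>i\<in>slots. if rec_item alg P M r Z (fst i) (snd i) = j then 1 else 0)"
    by (simp add: item_count_def slots_def sum.cartesian_product case_prod_beta)
  then show ?thesis
    by (simp add: hits_def sum.If_cases Int_def conj_commute)
qed

lemma hits_bumped_eq_iff:
  assumes "p \<subseteq> slots"
  shows "hits (bumped_rewards \<Delta> j) Z = p \<longleftrightarrow> hits flat_rewards (shift p Z) = p"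
proof -
  have same_hits: "hits (bumped_rewards \<Delta> j) Z = hits flat_rewards (shift p Z)"
    if slot_in_p: "\<And>s u. (s, u) \<in> slots \<Longrightarrow>
      obs alg (bumped_rewards \<Delta> j) M r Z s = obs alg flat_rewards M r (shift p Z) s \<Longrightarrow>
      (s, u) \<in> p \<longleftrightarrow> rec_item alg flat_rewards M r (shift p Z) s u = j"
  proof -
    have "obs alg (bumped_rewards \<Delta> j) M r Z t = obs alg flat_rewards M r (shift p Z) t" if "t \<le> T" for t
      using that slot_in_p by (intro obs_bumped_eq_obs_flat) (auto simp: shift_def slots_def)
    then show ?thesis
      by (auto simp: hits_def slots_def rec_item_def)
  qed
  show ?thesis
  proof
    assume hits_p: "hits (bumped_rewards \<Delta> j) Z = p"
    have "hits (bumped_rewards \<Delta> j) Z = hits flat_rewards (shift p Z)"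
    proof (rule same_hits)
      fix s u
      assume "(s, u) \<in> slots"
        and obs_eq: "obs alg (bumped_rewards \<Delta> j) M r Z s = obs alg flat_rewards M r (shift p Z) s"
      then have "(s, u) \<in> p \<longleftrightarrow> rec_item alg (bumped_rewards \<Delta> j) M r Z s u = j"
        by (simp add: hits_p[symmetric] hits_def)
      then show "(s, u) \<in> p \<longleftrightarrow> rec_item alg flat_rewards M r (shift p Z) s u = j"
        by (simp add: rec_item_def obs_eq)
    qed
    then show "hits flat_rewards (shift p Z) = p" using hits_p by simp
  next
    assume hits_p: "hits flat_rewards (shift p Z) = p"
    have "hits (bumped_rewards \<Delta> j) Z = hits flat_rewards (shift p Z)"
      using hits_p by (intro same_hits) (auto simp: hits_def set_eq_iff)
    then show "hits (bumped_rewards \<Delta> j) Z = p" using hits_p by simp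
  qed
qed

lemma distr_shift:
  assumes "p \<subseteq> slots"
  shows "distr \<nu> \<nu> (shift p) = density \<nu> (\<lambda>W. ennreal (likelihood p W))"
proof -
  define \<delta> where "\<delta> i = (if i \<in> p then \<Delta> else 0)" for i
  have "distr \<nu> \<nu> (shift p) = density \<nu> (\<lambda>W. \<Prod>i\<in>slots. ennreal (exp (\<delta> i * W i - (\<delta> i)\<^sup>2 / 2)))"
    unfolding noise_space_def shift_def slots_def[symmetric] \<delta>_def[symmetric]
  proof (rule distr_PiM_componentwise)
    fix i and A :: "real set" assume "A \<in> sets std_normal_distribution"
    then show "emeasure std_normal_distribution ((\<lambda>x. x + \<delta> i) -` A \<inter> space std_normal_distribution) =
      (\<integral>\<^sup>+ x. ennreal (exp (\<delta> i * x - (\<delta> i)\<^sup>2 / 2)) * indicator A x \<partial>std_normal_distribution)"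
      using emeasure_std_normal_shift[of A "\<delta> i"] by (simp add: vimage_def)
  qed (auto intro: prob_space_std_normal_distribution)
  also have "(\<lambda>W. \<Prod>i\<in>slots. ennreal (exp (\<delta> i * W i - (\<delta> i)\<^sup>2 / 2))) = (\<lambda>W. ennreal (likelihood p W))"
  proof
    fix W
    have "(\<Sum>i\<in>slots. \<delta> i * W i - (\<delta> i)\<^sup>2 / 2) = (\<Sum>i\<in>p. \<Delta> * W i - \<Delta>\<^sup>2 / 2)"
    proof -
      have "(\<Sum>i\<in>slots. \<delta> i * W i - (\<delta> i)\<^sup>2 / 2) = (\<Sum>i\<in>slots. if i \<in> p then \<Delta> * W i - \<Delta>\<^sup>2 / 2 else 0)"
        by (intro sum.cong) (auto simp: \<delta>_def)
      also have "\<dots> = (\<Sum>i\<in>p. \<Delta> * W i - \<Delta>\<^sup>2 / 2)"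
        using assms by (simp add: sum.If_cases Int_absorb1)
      finally show ?thesis .
    qed
    then show "(\<Prod>i\<in>slots. ennreal (exp (\<delta> i * W i - (\<delta> i)\<^sup>2 / 2))) = ennreal (likelihood p W)"
      by (simp add: prod_ennreal exp_sum[symmetric] likelihood_def)
  qed
  finally show ?thesis .
qed

lemma measurable_rec_item_slot:
  "i \<in> slots \<Longrightarrow> (\<lambda>W. rec_item alg P M r W (fst i) (snd i)) \<in> \<nu> \<rightarrow>\<^sub>M count_space UNIV"
  by (rule measurable_rec_item_noise[OF alg]) (auto simp: slots_def)

lemma sets_hits_eq:
  assumes "p \<subseteq> slots"
  shows "{W \<in> space \<nu>. hits P W = p} \<in> sets \<nu>"
proof -
  have rec_event: "{W \<in> space \<nu>. rec_item alg P M r W (fst i) (snd i) = j} \<in> sets \<nu>" if "i \<in> slots" for i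
    using measurable_sets[OF measurable_rec_item_slot[OF that], of "{j}"]
    by (simp add: vimage_def Int_def conj_commute)
  have "{W \<in> space \<nu>. \<forall>i\<in>slots. i \<in> p \<longleftrightarrow> rec_item alg P M r W (fst i) (snd i) = j} \<in> sets \<nu>"
  proof (rule sets.sets_Collect_finite_All)
    fix i assume "i \<in> slots"
    then show "{W \<in> space \<nu>. i \<in> p \<longleftrightarrow> rec_item alg P M r W (fst i) (snd i) = j} \<in> sets \<nu>"
      using rec_event sets.sets_Collect_neg[OF rec_event] by (cases "i \<in> p") auto
  qed simp
  moreover have "{W \<in> space \<nu>. hits P W = p} =
      {W \<in> space \<nu>. \<forall>i\<in>slots. i \<in> p \<longleftrightarrow> rec_item alg P M r W (fst i) (snd i) = j}"
    using assms by (auto simp: hits_def)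
  ultimately show ?thesis by simp
qed

lemma measurable_shift: "shift p \<in> \<nu> \<rightarrow>\<^sub>M \<nu>"
  unfolding shift_def noise_space_def slots_def by measurable

lemma shift_in_space: "shift p Z \<in> space \<nu>"
  by (auto simp: shift_def noise_space_def space_PiM slots_def)

lemma measurable_likelihood:
  assumes "p \<subseteq> slots"
  shows "likelihood p \<in> borel_measurable \<nu>"
proof -
  have "(\<lambda>W. W i) \<in> borel_measurable \<nu>" if "i \<in> p" for i
    using that assms measurable_noise_component[of "fst i" T "snd i" M] by (auto simp: slots_def)
  then show ?thesis
    unfolding likelihood_def by measurable
qed

lemma emeasure_hits_bumped:
  assumes "p \<subseteq> slots"
  shows "emeasure \<nu> {Z \<in> space \<nu>. hits (bumped_rewards \<Delta> j) Z = p} =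
    (\<integral>\<^sup>+ W. ennreal (likelihood p W) * indicator {W \<in> space \<nu>. hits flat_rewards W = p} W \<partial>\<nu>)"
proof -
  have "{Z \<in> space \<nu>. hits (bumped_rewards \<Delta> j) Z = p} =
      shift p -` {W \<in> space \<nu>. hits flat_rewards W = p} \<inter> space \<nu>"
    using hits_bumped_eq_iff[OF assms] shift_in_space by auto
  then have "emeasure \<nu> {Z \<in> space \<nu>. hits (bumped_rewards \<Delta> j) Z = p} =
      emeasure (distr \<nu> \<nu> (shift p)) {W \<in> space \<nu>. hits flat_rewards W = p}"
    by (simp add: emeasure_distr measurable_shift sets_hits_eq[OF assms])
  also have "\<dots> = emeasure (density \<nu> (\<lambda>W. ennreal (likelihood p W))) {W \<in> space \<nu>. hits flat_rewards W = p}"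
    by (simp add: distr_shift[OF assms])
  also have "\<dots> = (\<integral>\<^sup>+ W. ennreal (likelihood p W) * indicator {W \<in> space \<nu>. hits flat_rewards W = p} W \<partial>\<nu>)"
    using measurable_likelihood[OF assms] sets_hits_eq[OF assms] by (simp add: emeasure_density)
  finally show ?thesis .
qed

definition likelihood_ratio :: "(nat \<times> nat \<Rightarrow> real) \<Rightarrow> real" where
  "likelihood_ratio W = likelihood (hits flat_rewards W) W"

lemma nn_integral_hits_bumped:
  assumes nonneg: "\<And>p. 0 \<le> f p"
  shows "(\<integral>\<^sup>+ Z. ennreal (f (hits (bumped_rewards \<Delta> j) Z)) \<partial>\<nu>) =
    (\<integral>\<^sup>+ W. ennreal (f (hits flat_rewards W) * likelihood_ratio W) \<partial>\<nu>)"
proof -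
  let ?event = "\<lambda>P p. {W \<in> space \<nu>. hits P W = p}"
  have "(\<integral>\<^sup>+ Z. ennreal (f (hits (bumped_rewards \<Delta> j) Z)) \<partial>\<nu>) =
      (\<Sum>p\<in>Pow slots. \<integral>\<^sup>+ Z. ennreal (f p) * indicator (?event (bumped_rewards \<Delta> j) p) Z \<partial>\<nu>)"
    by (rule nn_integral_finite_partition) (auto simp: hits_subset_slots sets_hits_eq)
  also have "\<dots> = (\<Sum>p\<in>Pow slots. ennreal (f p) *
      (\<integral>\<^sup>+ W. ennreal (likelihood p W) * indicator (?event flat_rewards p) W \<partial>\<nu>))"
    by (intro sum.cong refl) (auto simp: nn_integral_cmult_indicator sets_hits_eq emeasure_hits_bumped)
  also have "\<dots> = (\<Sum>p\<in>Pow slots. \<integral>\<^sup>+ W. ennreal (f p * likelihood p W) * indicator (?event flat_rewards p) W \<partial>\<nu>)"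
  proof (intro sum.cong refl)
    fix p assume "p \<in> Pow slots"
    then have "(\<lambda>W. ennreal (likelihood p W) * indicator (?event flat_rewards p) W) \<in> borel_measurable \<nu>"
      by (intro borel_measurable_times_ennreal measurable_compose[OF measurable_likelihood measurable_ennreal]
          borel_measurable_indicator sets_hits_eq) auto
    then show "ennreal (f p) * (\<integral>\<^sup>+ W. ennreal (likelihood p W) * indicator (?event flat_rewards p) W \<partial>\<nu>) =
        (\<integral>\<^sup>+ W. ennreal (f p * likelihood p W) * indicator (?event flat_rewards p) W \<partial>\<nu>)"
      by (simp add: nn_integral_cmult[symmetric] ennreal_mult' nonneg mult.assoc)
  qed
  also have "\<dots> = (\<integral>\<^sup>+ W. ennreal (f (hits flat_rewards W) * likelihood_ratio W) \<partial>\<nu>)"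
    unfolding likelihood_ratio_def
    by (rule nn_integral_finite_partition[symmetric])
       (auto simp: hits_subset_slots sets_hits_eq
          intro!: measurable_compose[OF _ measurable_ennreal] borel_measurable_times measurable_likelihood)
  finally show ?thesis .
qed

definition reflect :: "nat \<times> nat \<Rightarrow> (nat \<times> nat \<Rightarrow> real) \<Rightarrow> nat \<times> nat \<Rightarrow> real" where
  "reflect i0 W = (\<lambda>i\<in>slots. if i = i0 then - W i else W i)"

lemma distr_reflect: "distr \<nu> \<nu> (reflect i0) = \<nu>"
proof -
  have "distr \<nu> \<nu> (reflect i0) = density \<nu> (\<lambda>W. \<Prod>i\<in>slots. 1)"
    unfolding noise_space_def reflect_def slots_def[symmetric]
  proof (rule distr_PiM_componentwise[where g="\<lambda>_ _. 1"])
    fix i and A :: "real set" assume "A \<in> sets std_normal_distribution"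
    then show "emeasure std_normal_distribution ((\<lambda>x. if i = i0 then - x else x) -` A \<inter> space std_normal_distribution) =
        (\<integral>\<^sup>+ x. 1 * indicator A x \<partial>std_normal_distribution)"
      using emeasure_std_normal_uminus[of A] by (cases "i = i0") (simp_all add: vimage_def)
  qed (auto intro: prob_space_std_normal_distribution)
  then show ?thesis
    by (simp add: density_1)
qed

lemma measurable_reflect: "reflect i0 \<in> \<nu> \<rightarrow>\<^sub>M \<nu>"
  unfolding reflect_def noise_space_def slots_def by measurable

lemma measurable_slot: "i \<in> slots \<Longrightarrow> (\<lambda>W. W i) \<in> borel_measurable \<nu>"
  using measurable_noise_component[of "fst i" T "snd i" M] by (auto simp: slots_def)

lemma integrable_slot: "i \<in> slots \<Longrightarrow> integrable \<nu> (\<lambda>W. W i)"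
  using integrable_noise_component[of "fst i" T "snd i" M] by (auto simp: slots_def)

lemma measurable_hit_noise:
  assumes i: "i \<in> slots"
  shows "(\<lambda>W. of_bool (i \<in> hits P W) * W i) \<in> borel_measurable \<nu>"
proof -
  have "(\<lambda>W. rec_item alg P M r W (fst i) (snd i)) \<in> \<nu> \<rightarrow>\<^sub>M count_space UNIV"
    by (rule measurable_rec_item_slot[OF i])
  then show ?thesis
    using i measurable_slot[OF i] by (simp add: hits_def) measurable
qed

text \<open>The recommendation in a slot does not depend on that slot's own noise, whose sign can therefore be
  flipped without changing the law.\<close>

lemma integral_hit_noise:
  assumes i: "i \<in> slots"
  shows "(\<integral>W. of_bool (i \<in> hits P W) * W i \<partial>\<nu>) = 0"
proof -
  obtain t u where tu: "i = (t, u)" by (cases i)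
  have same_rec: "rec_item alg P M r (reflect (t, u) W) t u = rec_item alg P M r W t u" for W
    unfolding rec_item_def using i tu by (subst obs_cong_noise[where Z' = W]) (auto simp: reflect_def slots_def)
  have hit_reflect: "of_bool (i \<in> hits P (reflect i W)) = of_bool (i \<in> hits P W)" for W
    by (simp add: hits_def tu same_rec)
  have reflect_at: "reflect i W i = - W i" for W
    using i by (simp add: reflect_def)
  have "(\<integral>W. of_bool (i \<in> hits P W) * W i \<partial>\<nu>) =
      (\<integral>W. of_bool (i \<in> hits P (reflect i W)) * reflect i W i \<partial>\<nu>)"
    by (subst (1) distr_reflect[symmetric, of i])
       (simp add: integral_distr measurable_reflect measurable_hit_noise[OF i])
  also have "\<dots> = - (\<integral>W. of_bool (i \<in> hits P W) * W i \<partial>\<nu>)"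
    using i by (simp add: hit_reflect reflect_at)
  finally show ?thesis by simp
qed

definition gain :: "(nat \<times> nat \<Rightarrow> real) \<Rightarrow> real" where
  "gain W = (\<Sum>i\<in>hits flat_rewards W. W i)"

lemma gain_eq_sum_slots: "gain W = (\<Sum>i\<in>slots. of_bool (i \<in> hits flat_rewards W) * W i)"
proof -
  have "(\<Sum>i\<in>slots. of_bool (i \<in> hits flat_rewards W) * W i) = (\<Sum>i\<in>slots. if i \<in> hits flat_rewards W then W i else 0)"
    by (intro sum.cong) auto
  also have "\<dots> = gain W"
    using hits_subset_slots[of flat_rewards W] by (simp add: gain_def sum.inter_restrict[symmetric] Int_absorb1)
  finally show ?thesis ..
qed

lemma
  shows integrable_gain: "integrable \<nu> gain"
    and integral_gain: "(\<integral>W. gain W \<partial>\<nu>) = 0"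
proof -
  have hit_noise: "integrable \<nu> (\<lambda>W. of_bool (i \<in> hits flat_rewards W) * W i)" if "i \<in> slots" for i
  proof (rule Bochner_Integration.integrable_bound[OF integrable_slot[OF that]])
    show "(\<lambda>W. of_bool (i \<in> hits flat_rewards W) * W i) \<in> borel_measurable \<nu>"
      using that by (rule measurable_hit_noise)
  qed auto
  then show "integrable \<nu> gain"
    unfolding gain_eq_sum_slots[abs_def] by (rule Bochner_Integration.integrable_sum)
  have "(\<integral>W. gain W \<partial>\<nu>) = (\<Sum>i\<in>slots. \<integral>W. of_bool (i \<in> hits flat_rewards W) * W i \<partial>\<nu>)"
    unfolding gain_eq_sum_slots by (rule Bochner_Integration.integral_sum) (rule hit_noise)
  then show "(\<integral>W. gain W \<partial>\<nu>) = 0"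
    by (simp add: integral_hit_noise)
qed

lemma card_hits_le: "card (hits P W) \<le> card slots"
  by (rule card_mono[OF finite_slots hits_subset_slots])

lemma measurable_card_hits: "(\<lambda>W. real (card (hits P W))) \<in> borel_measurable \<nu>"
proof -
  have "(\<lambda>W. rec_item alg P M r W t u) \<in> \<nu> \<rightarrow>\<^sub>M count_space UNIV" if "t < T" for t u
    using that by (intro measurable_rec_item_noise[OF alg]) simp
  then have "(\<lambda>W. item_count alg P M T r W j) \<in> borel_measurable \<nu>"
    unfolding item_count_def by measurable
  then show ?thesis
    by (simp add: item_count_eq_card_hits)
qed

lemma integrable_card_hits: "integrable \<nu> (\<lambda>W. real (card (hits P W)))"
proof -
  interpret prob_space \<nu> by (rule prob_space_noise_space)
  show ?thesis
    using card_hits_le by (intro integrable_const_bound[where B="card slots"]) (auto simp: measurable_card_hits)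
qed

lemma likelihood_ratio_pos: "0 < likelihood_ratio W"
  by (simp add: likelihood_ratio_def likelihood_def)

lemma ln_likelihood_ratio:
  "ln (likelihood_ratio W) = \<Delta> * gain W - \<Delta>\<^sup>2 / 2 * real (card (hits flat_rewards W))"
  by (simp add: likelihood_ratio_def likelihood_def gain_def sum_subtractf sum_distrib_left)

lemma measurable_likelihood_ratio: "likelihood_ratio \<in> borel_measurable \<nu>"
proof -
  have "(\<lambda>W. exp (ln (likelihood_ratio W))) \<in> borel_measurable \<nu>"
    unfolding ln_likelihood_ratio using borel_measurable_integrable[OF integrable_gain] measurable_card_hits
    by measurable
  then show ?thesis
    by (simp add: likelihood_ratio_pos)
qed

lemma
  shows integrable_likelihood_ratio: "integrable \<nu> likelihood_ratio"
    and integral_likelihood_ratio: "(\<integral>W. likelihood_ratio W \<partial>\<nu>) = 1"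
proof -
  interpret prob_space \<nu> by (rule prob_space_noise_space)
  have "(\<integral>\<^sup>+ W. ennreal (likelihood_ratio W) \<partial>\<nu>) = 1"
    using nn_integral_hits_bumped[of "\<lambda>_. 1"] by (simp add: emeasure_space_1)
  then show "integrable \<nu> likelihood_ratio" "(\<integral>W. likelihood_ratio W \<partial>\<nu>) = 1"
    using measurable_likelihood_ratio likelihood_ratio_pos
    by (auto intro: integrableI_nn_integral_finite simp: integral_eq_nn_integral less_imp_le)
qed

lemma
  shows integrable_card_hits_likelihood_ratio:
      "integrable \<nu> (\<lambda>W. real (card (hits flat_rewards W)) * likelihood_ratio W)"
    and integral_card_hits_likelihood_ratio:
      "(\<integral>W. real (card (hits flat_rewards W)) * likelihood_ratio W \<partial>\<nu>) =
        (\<integral>Z. real (card (hits (bumped_rewards \<Delta> j) Z)) \<partial>\<nu>)"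
proof -
  have "(\<integral>\<^sup>+ W. ennreal (real (card (hits flat_rewards W)) * likelihood_ratio W) \<partial>\<nu>) =
      (\<integral>\<^sup>+ Z. ennreal (real (card (hits (bumped_rewards \<Delta> j) Z))) \<partial>\<nu>)"
    using nn_integral_hits_bumped[of "\<lambda>p. real (card p)"] by simp
  also have "\<dots> = ennreal (\<integral>Z. real (card (hits (bumped_rewards \<Delta> j) Z)) \<partial>\<nu>)"
    by (rule nn_integral_eq_integral[OF integrable_card_hits]) simp
  finally have nn_eq: "(\<integral>\<^sup>+ W. ennreal (real (card (hits flat_rewards W)) * likelihood_ratio W) \<partial>\<nu>) =
      ennreal (\<integral>Z. real (card (hits (bumped_rewards \<Delta> j) Z)) \<partial>\<nu>)" .
  have measurable: "(\<lambda>W. real (card (hits flat_rewards W)) * likelihood_ratio W) \<in> borel_measurable \<nu>"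
    using measurable_card_hits measurable_likelihood_ratio by measurable
  have nonneg: "0 \<le> real (card (hits flat_rewards W)) * likelihood_ratio W" for W
    using likelihood_ratio_pos[of W] by simp
  show "integrable \<nu> (\<lambda>W. real (card (hits flat_rewards W)) * likelihood_ratio W)"
    using nn_eq by (intro integrableI_nn_integral_finite[OF measurable]) (auto simp: nonneg)
  show "(\<integral>W. real (card (hits flat_rewards W)) * likelihood_ratio W \<partial>\<nu>) =
      (\<integral>Z. real (card (hits (bumped_rewards \<Delta> j) Z)) \<partial>\<nu>)"
    using nn_eq measurable nonneg
    by (subst integral_eq_nn_integral) (auto simp: integral_nonneg)
qed

lemma
  shows integrable_ln_likelihood_ratio: "integrable \<nu> (\<lambda>W. ln (likelihood_ratio W))"
    and integral_ln_likelihood_ratio: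
      "(\<integral>W. ln (likelihood_ratio W) \<partial>\<nu>) = - (\<Delta>\<^sup>2 / 2) * (\<integral>W. real (card (hits flat_rewards W)) \<partial>\<nu>)"
  unfolding ln_likelihood_ratio using integrable_gain integral_gain integrable_card_hits by auto

text \<open>Integrating the pointwise bound \<open>n (L - 1) \<le> K/2 ((L - 1 - ln L)/(2\<epsilon>) + \<epsilon>(L + 1) + (L - 1))\<close> for the
  hit count \<open>n \<le> K\<close> and the likelihood ratio \<open>L\<close>, using \<open>E L = 1\<close> and \<open>E ln L = - \<Delta>\<^sup>2/2 E n\<close>.\<close>

lemma integral_card_hits_bumped_le:
  fixes \<epsilon> :: real
  assumes "0 < \<epsilon>"
  shows "(\<integral>Z. real (card (hits (bumped_rewards \<Delta> j) Z)) \<partial>\<nu>) \<le>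
    (1 + card slots * \<Delta>\<^sup>2 / (8 * \<epsilon>)) * (\<integral>W. real (card (hits flat_rewards W)) \<partial>\<nu>) + card slots * \<epsilon>"
proof -
  interpret prob_space \<nu> by (rule prob_space_noise_space)
  define K where "K = real (card slots)"
  define n where "n W = real (card (hits flat_rewards W))" for W
  define L where "L W = likelihood_ratio W" for W
  have pointwise: "n W * L W - n W \<le>
      (K / (4 * \<epsilon>) + K * \<epsilon> / 2 + K / 2) * L W - K / (4 * \<epsilon>) * ln (L W) + (K * \<epsilon> / 2 - K / 2 - K / (4 * \<epsilon>))" for W
  proof -
    have "n W * (L W - 1) \<le> K / 2 * (\<bar>L W - 1\<bar> + (L W - 1))"
      using card_hits_le[of flat_rewards W] by (intro mult_diff_one_le) (auto simp: n_def K_def)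
    also have "\<dots> \<le> K / 2 * ((L W - 1 - ln (L W)) / (2 * \<epsilon>) + \<epsilon> * (L W + 1) + (L W - 1))"
      using abs_diff_one_le_divergence[OF likelihood_ratio_pos assms, of W]
      by (intro mult_left_mono) (auto simp: K_def L_def)
    also have "\<dots> = (K / (4 * \<epsilon>) + K * \<epsilon> / 2 + K / 2) * L W - K / (4 * \<epsilon>) * ln (L W)
        + (K * \<epsilon> / 2 - K / 2 - K / (4 * \<epsilon>))"
      using assms by (simp add: field_simps)
    finally show ?thesis
      by (simp add: algebra_simps)
  qed
  have "(\<integral>W. n W * L W - n W \<partial>\<nu>) \<le>
      (\<integral>W. (K / (4 * \<epsilon>) + K * \<epsilon> / 2 + K / 2) * L W - K / (4 * \<epsilon>) * ln (L W) + (K * \<epsilon> / 2 - K / 2 - K / (4 * \<epsilon>)) \<partial>\<nu>)"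
    using pointwise integrable_card_hits integrable_card_hits_likelihood_ratio integrable_likelihood_ratio
      integrable_ln_likelihood_ratio
    by (intro integral_mono) (auto simp: n_def L_def)
  then have "(\<integral>Z. real (card (hits (bumped_rewards \<Delta> j) Z)) \<partial>\<nu>) - (\<integral>W. n W \<partial>\<nu>) \<le>
      K * \<Delta>\<^sup>2 / (8 * \<epsilon>) * (\<integral>W. n W \<partial>\<nu>) + K * \<epsilon>"
    using integrable_card_hits integrable_card_hits_likelihood_ratio integrable_likelihood_ratio
      integrable_ln_likelihood_ratio integral_card_hits_likelihood_ratio
    by (simp add: n_def L_def integral_likelihood_ratio integral_ln_likelihood_ratio prob_space field_simps)
  then show ?thesis
    by (simp add: n_def K_def algebra_simps)
qed

end

lemma item_count_nonneg: "0 \<le> item_count alg P M T r Z j"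
  by (simp add: item_count_def sum_nonneg)

lemma item_count_le: "item_count alg P M T r Z j \<le> real T * real M"
proof -
  have "item_count alg P M T r Z j \<le> (\<Sum>t<T. \<Sum>u<M. 1)"
    unfolding item_count_def by (intro sum_mono) auto
  then show ?thesis by simp
qed

lemma sum_item_count:
  assumes "online_algorithm M N alg"
  shows "(\<Sum>j<N. item_count alg P M T r Z j) = real (T * M)"
proof -
  have "rec_item alg P M r Z t u < N" if "u < M" for t u
    using assms that by (simp add: online_algorithm_def rec_item_def)
  then have "(\<Sum>j<N. if rec_item alg P M r Z t u = j then 1 else 0) = (1::real)" if "u < M" for t u
    using that by simp
  moreover have "(\<Sum>j<N. item_count alg P M T r Z j) =
      (\<Sum>t<T. \<Sum>u<M. \<Sum>j<N. if rec_item alg P M r Z t u = j then 1 else 0)"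
    unfolding item_count_def by (subst sum.swap) (simp add: sum.swap[of _ "{..<N}"])
  ultimately show ?thesis
    by simp
qed

lemma total_reward_bumped:
  assumes "M \<ge> 1"
  shows "(\<Sum>t<T. 1 / real M * (\<Sum>u<M. bumped_rewards \<Delta> j u (rec_item alg (bumped_rewards \<Delta> j) M r Z t u) + Z (t, u))) =
    real T / 2 + \<Delta> / real M * item_count alg (bumped_rewards \<Delta> j) M T r Z j + (\<Sum>t<T. \<Sum>u<M. Z (t, u)) / real M"
proof -
  define hits_in where "hits_in t = (\<Sum>u<M. if rec_item alg (bumped_rewards \<Delta> j) M r Z t u = j then 1 else 0 :: real)" for t
  define noise_in where "noise_in t = (\<Sum>u<M. Z (t, u))" for t
  have "(\<Sum>u<M. bumped_rewards \<Delta> j u (rec_item alg (bumped_rewards \<Delta> j) M r Z t u) + Z (t, u)) =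
      (\<Sum>u<M. 1 / 2 + \<Delta> * (if rec_item alg (bumped_rewards \<Delta> j) M r Z t u = j then 1 else 0) + Z (t, u))" for t
    by (intro sum.cong) (auto simp: bumped_rewards_def)
  then have "(\<Sum>u<M. bumped_rewards \<Delta> j u (rec_item alg (bumped_rewards \<Delta> j) M r Z t u) + Z (t, u)) =
      real M / 2 + \<Delta> * hits_in t + noise_in t" for t
    by (simp add: hits_in_def noise_in_def sum.distrib sum_distrib_left)
  then have "(\<Sum>t<T. 1 / real M * (\<Sum>u<M. bumped_rewards \<Delta> j u (rec_item alg (bumped_rewards \<Delta> j) M r Z t u) + Z (t, u))) =
      (\<Sum>t<T. 1 / 2 + \<Delta> / real M * hits_in t + noise_in t / real M)"
    using assms by (intro sum.cong) (auto simp: field_simps)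
  also have "\<dots> = real T / 2 + \<Delta> / real M * (\<Sum>t<T. hits_in t) + (\<Sum>t<T. noise_in t) / real M"
    by (simp add: sum.distrib sum_distrib_left sum_divide_distrib)
  finally show ?thesis
    by (simp add: hits_in_def noise_in_def item_count_def)
qed

lemma max_bumped_rewards:
  assumes "j < N" "0 \<le> \<Delta>"
  shows "Max (bumped_rewards \<Delta> j u ` {..<N}) = 1 / 2 + \<Delta>"
  using assms by (intro Max_eqI) (auto simp: bumped_rewards_def image_iff intro!: bexI[of _ j])

lemma rank_bumped_rewards: "vec_space.rank M (to_mat M N (bumped_rewards \<Delta> j)) \<le> 1"
  by (rule vec_space.rank_le_1_product_entries[where f="\<lambda>_. 1" and g="\<lambda>k. bumped_rewards \<Delta> j 0 k" and nc=N])
     (auto simp: to_mat_def bumped_rewards_def)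

lemma integral_item_count_bumped_le:
  fixes \<Delta> \<epsilon> :: real
  assumes "online_algorithm M N alg" "0 < \<epsilon>"
  shows "(\<integral>Z. item_count alg (bumped_rewards \<Delta> j) M T r Z j \<partial>noise_space T M) \<le>
    (1 + T * M * \<Delta>\<^sup>2 / (8 * \<epsilon>)) * (\<integral>W. item_count alg flat_rewards M T r W j \<partial>noise_space T M) + T * M * \<epsilon>"
proof -
  interpret bump_experiment M N T alg r \<Delta> j
    by standard (rule assms(1))
  show ?thesis
    using integral_card_hits_bumped_le[OF assms(2)] by (simp add: item_count_eq_card_hits slots_def)
qed

definition bump_size :: "nat \<Rightarrow> nat \<Rightarrow> nat \<Rightarrow> real" where
  "bump_size M N T = sqrt (real N / (16 * (real T * real M)))"

lemma
  assumes "M \<ge> 1" "T \<ge> 1" "M * T \<ge> N - 1"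
  shows bump_size_nonneg: "0 \<le> bump_size M N T"
    and bump_size_le_half: "bump_size M N T \<le> 1 / 2"
    and bump_size_sq: "real T * real M * (bump_size M N T)\<^sup>2 = real N / 16"
    and bump_size_regret_scale: "real T * bump_size M N T = sqrt (real N * real T / real M) / 4"
proof -
  have K_pos: "0 < real T * real M"
    using assms by simp
  show "0 \<le> bump_size M N T"
    by (simp add: bump_size_def)
  have "1 \<le> T * M"
    using assms(1,2) by simp
  then have "N \<le> 2 * (T * M)"
    using assms(3) by (simp only: mult.commute[of M])
  then have "real N \<le> 2 * (real T * real M)"
    by (simp flip: of_nat_mult)
  then have "real N / (16 * (real T * real M)) \<le> (1 / 2)\<^sup>2"
    using K_pos by (simp add: field_simps)
  then show "bump_size M N T \<le> 1 / 2"
    unfolding bump_size_def using real_sqrt_le_mono by fastforce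
  have "(bump_size M N T)\<^sup>2 = real N / (16 * (real T * real M))"
    using K_pos unfolding bump_size_def by (intro real_sqrt_pow2) simp
  then show "real T * real M * (bump_size M N T)\<^sup>2 = real N / 16"
    using assms(1,2) by simp
  have "real T * bump_size M N T = sqrt ((real T)\<^sup>2 * (real N / (16 * (real T * real M))))"
    using real_sqrt_abs[of "real T"] by (simp only: bump_size_def real_sqrt_mult abs_of_nat)
  also have "(real T)\<^sup>2 * (real N / (16 * (real T * real M))) = (real N * real T / real M) / 16"
    using assms by (simp add: field_simps power2_eq_square)
  also have "sqrt ((real N * real T / real M) / 16) = sqrt (real N * real T / real M) / 4"
    using real_sqrt_unique[of 4 16] by (simp only: real_sqrt_divide) simp
  finally show "real T * bump_size M N T = sqrt (real N * real T / real M) / 4" .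
qed

locale randomized_algorithm =
  fixes M N T :: nat and alg :: algorithm and S :: "real measure"
  assumes alg: "online_algorithm M N alg"
    and prob_space_seed: "prob_space S" and sets_seed: "sets S = sets (borel :: real measure)"
begin

abbreviation "\<Omega> \<equiv> S \<Otimes>\<^sub>M noise_space T M"

sublocale pair_prob_space S "noise_space T M"
proof -
  interpret S: prob_space S by (rule prob_space_seed)
  interpret N: prob_space "noise_space T M" by (rule prob_space_noise_space)
  show "pair_prob_space S (noise_space T M)" ..
qed

definition expected_count :: "(nat \<Rightarrow> nat \<Rightarrow> real) \<Rightarrow> nat \<Rightarrow> real" where
  "expected_count P j = (\<integral>x. item_count alg P M T (fst x) (snd x) j \<partial>\<Omega>)"

lemma measurable_item_count: "(\<lambda>x. item_count alg P M T (fst x) (snd x) j) \<in> borel_measurable \<Omega>"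
proof -
  have "sets \<Omega> = sets (borel \<Otimes>\<^sub>M noise_space T M)"
    using sets_seed by (intro sets_pair_measure_cong) auto
  moreover have "(\<lambda>x. rec_item alg P M (fst x) (snd x) t u) \<in> borel \<Otimes>\<^sub>M noise_space T M \<rightarrow>\<^sub>M count_space UNIV"
    if "t < T" for t u
    using that by (intro measurable_rec_item[OF alg]) simp
  then have "(\<lambda>x. item_count alg P M T (fst x) (snd x) j) \<in> borel_measurable (borel \<Otimes>\<^sub>M noise_space T M)"
    unfolding item_count_def by measurable
  ultimately show ?thesis
    by (simp cong: measurable_cong_sets)
qed

lemma integrable_item_count: "integrable \<Omega> (\<lambda>x. item_count alg P M T (fst x) (snd x) j)"
  by (rule P.integrable_const_bound[where B="real T * real M"])
     (auto simp: measurable_item_count item_count_nonneg item_count_le)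

lemma expected_count_eq_iterated:
  "expected_count P j = (\<integral>r. (\<integral>Z. item_count alg P M T r Z j \<partial>noise_space T M) \<partial>S)"
  using integral_fst'[OF integrable_item_count] by (simp add: expected_count_def)

lemma sum_expected_count: "(\<Sum>j<N. expected_count P j) = real (T * M)"
proof -
  have "(\<Sum>j<N. expected_count P j) = (\<integral>x. (\<Sum>j<N. item_count alg P M T (fst x) (snd x) j) \<partial>\<Omega>)"
    unfolding expected_count_def by (rule Bochner_Integration.integral_sum[symmetric]) (rule integrable_item_count)
  then show ?thesis
    by (simp add: sum_item_count[OF alg] P.prob_space)
qed

lemma expected_count_bumped_le:
  fixes \<Delta> \<epsilon> :: real
  assumes "0 < \<epsilon>"
  shows "expected_count (bumped_rewards \<Delta> j) j \<le>
    (1 + T * M * \<Delta>\<^sup>2 / (8 * \<epsilon>)) * expected_count flat_rewards j + T * M * \<epsilon>"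
proof -
  have "expected_count (bumped_rewards \<Delta> j) j \<le>
      (\<integral>r. (1 + T * M * \<Delta>\<^sup>2 / (8 * \<epsilon>)) * (\<integral>W. item_count alg flat_rewards M T r W j \<partial>noise_space T M)
        + T * M * \<epsilon> \<partial>S)"
    unfolding expected_count_eq_iterated
    using integrable_fst'[OF integrable_item_count] integral_item_count_bumped_le[OF alg assms]
    by (intro integral_mono) auto
  then show ?thesis
    using integrable_fst'[OF integrable_item_count]
    by (simp add: expected_count_eq_iterated M1.prob_space)
qed

lemma
  shows integrable_total_noise: "integrable \<Omega> (\<lambda>x. \<Sum>t<T. \<Sum>u<M. snd x (t, u))"
    and integral_total_noise: "(\<integral>x. (\<Sum>t<T. \<Sum>u<M. snd x (t, u)) \<partial>\<Omega>) = 0"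
proof -
  have law: "distr \<Omega> (noise_space T M) snd = noise_space T M"
    by (intro distr_pair_snd prob_space_seed M2.sigma_finite_measure_axioms)
  have integrable: "integrable (noise_space T M) (\<lambda>Z. \<Sum>t<T. \<Sum>u<M. Z (t, u))"
    by (intro Bochner_Integration.integrable_sum integrable_noise_component) auto
  note measurable = measurable_snd[of S "noise_space T M"] borel_measurable_integrable[OF integrable]
  show "integrable \<Omega> (\<lambda>x. \<Sum>t<T. \<Sum>u<M. snd x (t, u))"
    using integrable integrable_distr_eq[OF measurable] by (simp add: law)
  have "(\<integral>x. (\<Sum>t<T. \<Sum>u<M. snd x (t, u)) \<partial>\<Omega>) = (\<integral>Z. (\<Sum>t<T. \<Sum>u<M. Z (t, u)) \<partial>noise_space T M)"
    using integral_distr[OF measurable] by (simp add: law)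
  also have "\<dots> = (\<Sum>t<T. \<integral>Z. (\<Sum>u<M. Z (t, u)) \<partial>noise_space T M)"
    by (rule Bochner_Integration.integral_sum)
       (auto intro!: Bochner_Integration.integrable_sum integrable_noise_component)
  also have "\<dots> = (\<Sum>t<T. \<Sum>u<M. \<integral>Z. Z (t, u) \<partial>noise_space T M)"
    by (intro sum.cong refl Bochner_Integration.integral_sum integrable_noise_component) auto
  finally show "(\<integral>x. (\<Sum>t<T. \<Sum>u<M. snd x (t, u)) \<partial>\<Omega>) = 0"
    by (simp add: integral_noise_component)
qed

lemma regret_bumped:
  fixes \<Delta> :: real
  assumes "M \<ge> 1" "j < N" "0 \<le> \<Delta>"
  shows "regret alg S (bumped_rewards \<Delta> j) M N T = T * \<Delta> - \<Delta> / M * expected_count (bumped_rewards \<Delta> j) j"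
proof -
  have "(\<integral>x. (case x of (r, Z) \<Rightarrow> \<Sum>t<T. 1 / real M *
        (\<Sum>u<M. bumped_rewards \<Delta> j u (rec_item alg (bumped_rewards \<Delta> j) M r Z t u) + Z (t, u))) \<partial>\<Omega>) =
      (\<integral>x. real T / 2 + \<Delta> / real M * item_count alg (bumped_rewards \<Delta> j) M T (fst x) (snd x) j
        + (\<Sum>t<T. \<Sum>u<M. snd x (t, u)) / real M \<partial>\<Omega>)"
    by (intro Bochner_Integration.integral_cong refl) (simp only: case_prod_beta total_reward_bumped[OF assms(1)])
  also have "\<dots> = real T / 2 + \<Delta> / real M * expected_count (bumped_rewards \<Delta> j) j"
    using integrable_item_count integrable_total_noise
    by (simp add: expected_count_def integral_total_noise P.prob_space)
  finally show ?thesis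
    using assms by (simp add: regret_def max_bumped_rewards algebra_simps)
qed

lemma regret_bumped_ge:
  assumes "M \<ge> 1" "N \<ge> 2" "T \<ge> 1" "M * T \<ge> N - 1" "j < N"
    and rarely_pulled: "expected_count flat_rewards j \<le> real T * real M / real N"
  shows "regret alg S (bumped_rewards (bump_size M N T) j) M N T \<ge> 1 / 16 * sqrt (real N * real T / real M)"
proof -
  define K where "K = real T * real M"
  define \<Delta> where "\<Delta> = bump_size M N T"
  have "0 < K" and "0 \<le> \<Delta>" and K_\<Delta>: "real T * real M * \<Delta>\<^sup>2 = real N / 16"
    using assms bump_size_nonneg bump_size_sq by (auto simp: K_def \<Delta>_def)
  have "expected_count (bumped_rewards \<Delta> j) j \<le> (1 + real N / 16) * expected_count flat_rewards j + K / 8"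
    using expected_count_bumped_le[of "1 / 8" \<Delta> j] by (simp add: K_def K_\<Delta>)
  also have "\<dots> \<le> (1 + real N / 16) * (K / real N) + K / 8"
    using rarely_pulled by (intro add_right_mono mult_left_mono) (auto simp: K_def)
  also have "\<dots> \<le> 11 / 16 * K"
    using \<open>0 < K\<close> assms(2) by (simp add: field_simps)
  finally have "\<Delta> / real M * expected_count (bumped_rewards \<Delta> j) j \<le> \<Delta> / real M * (11 / 16 * K)"
    using \<open>0 \<le> \<Delta>\<close> by (intro mult_left_mono) auto
  also have "\<dots> = 11 / 16 * (real T * \<Delta>)"
    using assms(1) by (simp add: K_def)
  finally have "regret alg S (bumped_rewards \<Delta> j) M N T \<ge> 5 / 16 * (real T * \<Delta>)"
    using regret_bumped[OF assms(1,5) \<open>0 \<le> \<Delta>\<close>] by (simp add: mult.commute)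
  moreover have "real T * \<Delta> = sqrt (real N * real T / real M) / 4"
    using bump_size_regret_scale[OF assms(1,3,4)] by (simp add: \<Delta>_def)
  moreover have "0 \<le> real T * \<Delta>"
    using \<open>0 \<le> \<Delta>\<close> by simp
  ultimately show ?thesis
    by (simp add: \<Delta>_def)
qed

end

theorem theorem4:
  shows "\<exists>c > (0::real). \<forall>M N T :: nat.
     M \<ge> 1 \<and> N \<ge> 2 \<and> T \<ge> 1 \<and> M * T \<ge> N - 1 \<longrightarrow>
     (\<forall>alg S. online_algorithm M N alg \<and> prob_space S \<and> sets S = sets (borel :: real measure) \<longrightarrow>
        (\<exists>P :: nat \<Rightarrow> nat \<Rightarrow> real.
            (\<forall>i<M. \<forall>j<N. 0 \<le> P i j \<and> P i j \<le> 1) \<and>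
            vec_space.rank M (to_mat M N P) \<le> 1 \<and>
            regret alg S P M N T \<ge> c * sqrt (real N * real T / real M)))"
proof (intro exI[of _ "1 / 16"] conjI allI impI; (elim conjE)?)
  fix M N T :: nat and alg :: algorithm and S :: "real measure"
  assume size: "M \<ge> 1" "N \<ge> 2" "T \<ge> 1" "M * T \<ge> N - 1"
    and "online_algorithm M N alg" "prob_space S" "sets S = sets (borel :: real measure)"
  then interpret randomized_algorithm M N T alg S
    by (intro randomized_algorithm.intro)
  obtain j where "j < N" and rarely_pulled: "expected_count flat_rewards j \<le> real T * real M / real N"
    using exists_le_average[of "{..<N}" "expected_count flat_rewards"] size(2)
    by (auto simp: sum_expected_count lessThan_empty_iff)
  let ?\<Delta> = "bump_size M N T"
  show "\<exists>P. (\<forall>i<M. \<forall>j<N. 0 \<le> P i j \<and> P i j \<le> 1) \<and> vec_space.rank M (to_mat M N P) \<le> 1 \<and>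
      1 / 16 * sqrt (real N * real T / real M) \<le> regret alg S P M N T"
    using bump_size_nonneg[OF size(1,3,4)] bump_size_le_half[OF size(1,3,4)]
      rank_bumped_rewards regret_bumped_ge[OF size \<open>j < N\<close> rarely_pulled]
    by (intro exI[of _ "bumped_rewards ?\<Delta> j"]) (auto simp: bumped_rewards_def)
qed simp

end
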